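(* Let $\mathcal{E}\subseteq\mathrm{CL}(\mathbb{R})$ be hereditary. Then there exists $\mathcal{G}\subseteq C(\mathbb{R},\mathbb{R})$ such that $\mathcal{E}$ is the least element of $(\mathcal{K}_\mathcal{G},\subseteq)$.
   Context: $\mathrm{CL}(\mathbb{R})$ denotes the family of all closed subsets of $\mathbb{R}$ and $C(\mathbb{R},\mathbb{R})$ the set of all continuous functions $\mathbb{R}\to\mathbb{R}$. For $\mathcal{G}\subseteq C(\mathbb{R},\mathbb{R})$ let $R_\mathcal{G}=\{(f,E)\in C(\mathbb{R},\mathbb{R})\times\mathrm{CL}(\mathbb{R}):(\exists g\in\mathcal{G})\, f\restriction E=g\restriction E\}$. For $\mathcal{F}\subseteq C(\mathbb{R},\mathbb{R})$ put $E_\mathcal{G}(\mathcal{F})=\{E\in\mathrm{CL}(\mathbb{R}):(\forall f\in\mathcal{F})\,(f,E)\in R_\mathcal{G}\}$, and let $\mathcal{K}_\mathcal{G}=\{E_\mathcal{G}(\mathcal{F}):\mathcal{F}\subseteq C(\mathbb{R},\mathbb{R})\}$, ordered by inclusion (it is a complete lattice). A family $\mathcal{E}\subseteq\mathrm{CL}(\mathbb{R})$ is hereditary if for all $D,E\in\mathrm{CL}(\mathbb{R})$, $D\subseteq E\in\mathcal{E}$ implies $D\in\mathcal{E}$. *)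

theory Defs
  imports "HOL-Analysis.Analysis"
begin

definition CL :: "real set set" where
  "CL = {E. closed E}"

definition Cfun :: "(real \<Rightarrow> real) set" where
  "Cfun = {f. continuous_on UNIV f}"

definition R_rel :: "(real \<Rightarrow> real) set \<Rightarrow> ((real \<Rightarrow> real) \<times> real set) set" where
  "R_rel G = {(f, E). f \<in> Cfun \<and> E \<in> CL \<and> (\<exists>g\<in>G. \<forall>x\<in>E. f x = g x)}"

definition E_of :: "(real \<Rightarrow> real) set \<Rightarrow> (real \<Rightarrow> real) set \<Rightarrow> real set set" where
  "E_of G F = {E \<in> CL. \<forall>f\<in>F. (f, E) \<in> R_rel G}"

definition K_fam :: "(real \<Rightarrow> real) set \<Rightarrow> real set set set" where
  "K_fam G = {E_of G F | F. F \<subseteq> Cfun}"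

definition hereditary :: "real set set \<Rightarrow> bool" where
  "hereditary \<E> \<longleftrightarrow> (\<forall>D\<in>CL. \<forall>E\<in>CL. D \<subseteq> E \<and> E \<in> \<E> \<longrightarrow> D \<in> \<E>)"

end

theory Submission
  imports Defs
begin

(* Enumerate, along a well-order of length continuum, the pairs (D, f) with D in the family and
   f continuous, and the closed sets E outside the family. To each pair attach g = f + s * z_D,
   where z_D is continuous with zero set D, so that g agrees with f on D; to each E attach a
   constant c_E that must agree on E with no such g. Heredity makes E not a subset of D, so for
   given c_E at most one s is excluded; E is nonempty (heredity puts the empty set in the family),
   so for given s at most one c_E is excluded. Every point of the enumeration has fewer than
   continuum many predecessors, so the values can be chosen recursively. The resulting G realises
   the family as E_G(C(R,R)), the least element of K_G because E_G is antitone. *)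

unbundle cardinal_syntax

lemma well_order_recursive_choice:
  assumes "Well_order r"
    and exists: "\<And>F x. \<exists>v. P F x v"
    and local: "\<And>F F' x. (\<And>y. y \<in> underS r x \<Longrightarrow> F y = F' y) \<Longrightarrow> P F x = P F' x"
  shows "\<exists>F. \<forall>x. P F x (F x)"
proof -
  define H where "H F x = (SOME v. P F x v)" for F x
  have "wf (r - Id)"
    using assms(1) by (simp add: well_order_on_def)
  moreover have "adm_wf (r - Id) H"
    unfolding adm_wf_def
  proof (intro allI impI)
    fix F F' :: "'a \<Rightarrow> 'b" and x
    assume "\<forall>y. (y, x) \<in> r - Id \<longrightarrow> F y = F' y"
    then have "P F x = P F' x"
      by (intro local) (simp add: underS_def)
    then show "H F x = H F' x"
      by (simp add: H_def)
  qed
  ultimately have fixpoint: "wfrec (r - Id) H = H (wfrec (r - Id) H)"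
    by (rule wfrec_fixpoint)
  have "P (wfrec (r - Id) H) x (wfrec (r - Id) H x)" for x
    by (subst fixpoint) (unfold H_def, rule someI_ex, rule exists)
  then show ?thesis by blast
qed

lemma not_subset_image_underS_card_of:
  assumes "a \<in> A"
  shows "\<not> A \<subseteq> f ` underS (card_of A) a"
proof
  assume cover: "A \<subseteq> f ` underS (card_of A) a"
  have "|underS (card_of A) a| <o |A|"
    using card_of_underS[OF card_of_Card_order] assms by (simp add: Field_card_of)
  moreover have "|A| \<le>o |underS (card_of A) a|"
    using ordLeq_transitive[OF card_of_mono1[OF cover] card_of_image] .
  ultimately show False
    using not_ordLess_ordLeq by blast
qed

lemma clash_free_labelling:
  fixes I :: "'i set" and clash :: "'i \<Rightarrow> 'v \<Rightarrow> 'i \<Rightarrow> 'v \<Rightarrow> bool"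
  assumes card: "|I| \<le>o |UNIV :: 'v set|"
    and sym: "\<And>i s j t. clash i s j t \<Longrightarrow> clash j t i s"
    and unique: "\<And>i j s s' t. \<lbrakk>i \<in> I; j \<in> I; i \<noteq> j; clash i s j t; clash i s' j t\<rbrakk> \<Longrightarrow> s = s'"
  shows "\<exists>F. \<forall>i\<in>I. \<forall>j\<in>I. i \<noteq> j \<longrightarrow> \<not> clash i (F i) j (F j)"
proof -
  obtain h :: "'i \<Rightarrow> 'v" where h: "inj_on h I"
    using card card_of_ordLeq[of I "UNIV :: 'v set"] by blast
  define r where "r = |UNIV :: 'v set|"
  define dec where "dec = inv_into I h"
  \<comment> \<open>Labels are chosen along the cardinal order of 'v, into which I is embedded by h; each of
    the fewer than |'v| predecessors of a point forbids at most one value there.\<close>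
  define P where "P F x v \<longleftrightarrow>
      (\<forall>y \<in> underS r x. x \<in> h ` I \<longrightarrow> y \<in> h ` I \<longrightarrow> \<not> clash (dec x) v (dec y) (F y))"
    for F :: "'v \<Rightarrow> 'v" and x v
  have well_order: "Well_order r" and field: "Field r = UNIV"
    unfolding r_def by (rule card_of_Well_order, rule Field_card_of)
  have "\<exists>F. \<forall>x. P F x (F x)"
  proof (rule well_order_recursive_choice[OF well_order])
    show "\<exists>v. P F x v" for F x
    proof -
      define forbidden where "forbidden y = (SOME v. clash (dec x) v (dec y) (F y))" for y
      obtain v where v: "v \<notin> forbidden ` underS r x"
        using not_subset_image_underS_card_of[of x UNIV forbidden] unfolding r_def by blast
      have "P F x v"
        unfolding P_def
      proof (intro ballI impI notI)
        fix y
        assume y: "y \<in> underS r x" "x \<in> h ` I" "y \<in> h ` I"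
          and clash: "clash (dec x) v (dec y) (F y)"
        have decoded: "dec x \<in> I" "dec y \<in> I"
          using y(2,3) by (simp_all add: dec_def inv_into_into)
        have distinct: "dec x \<noteq> dec y"
          using y by (metis dec_def f_inv_into_f underS_E)
        have "clash (dec x) (forbidden y) (dec y) (F y)"
          unfolding forbidden_def using clash by (rule someI)
        then have "v = forbidden y"
          by (rule unique[OF decoded distinct clash])
        then show False
          using v y(1) by blast
      qed
      then show ?thesis ..
    qed
    show "P F x = P F' x" if "\<And>y. y \<in> underS r x \<Longrightarrow> F y = F' y" for F F' x
      unfolding P_def using that by auto
  qed
  then obtain F where F: "\<And>x. P F x (F x)"
    by blast
  have dec_h: "dec (h k) = k" if "k \<in> I" for k
    using h that by (simp add: dec_def)
  have avoids: "\<not> clash k (F (h k)) l (F (h l))"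
    if "h l \<in> underS r (h k)" "k \<in> I" "l \<in> I" for k l
    using F[of "h k"] that unfolding P_def by (metis dec_h imageI)
  have "\<not> clash i (F (h i)) j (F (h j))" if "i \<in> I" "j \<in> I" "i \<noteq> j" for i j
  proof -
    have "h i \<noteq> h j"
      using h that by (meson inj_on_eq_iff)
    moreover have "(h i, h j) \<in> r \<or> (h j, h i) \<in> r"
      using wo_rel.TOTALS[of r, unfolded wo_rel_def, OF well_order] field by blast
    ultimately have "h i \<in> underS r (h j) \<or> h j \<in> underS r (h i)"
      by (auto simp: underS_def)
    then show ?thesis
      using avoids[of j i] avoids[of i j] sym that by blast
  qed
  then show ?thesis
    by (intro exI[of _ "\<lambda>i. F (h i)"]) blast
qed

lemma bipartite_clash_free_labelling:
  fixes A :: "'a set" and B :: "'b set" and clash :: "'a \<Rightarrow> 'v \<Rightarrow> 'b \<Rightarrow> 'v \<Rightarrow> bool"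
  assumes card: "|A <+> B| \<le>o |UNIV :: 'v set|"
    and unique_left: "\<And>a b s s' t. \<lbrakk>a \<in> A; b \<in> B; clash a s b t; clash a s' b t\<rbrakk> \<Longrightarrow> s = s'"
    and unique_right: "\<And>a b s t t'. \<lbrakk>a \<in> A; b \<in> B; clash a s b t; clash a s b t'\<rbrakk> \<Longrightarrow> t = t'"
  shows "\<exists>\<sigma> \<tau>. \<forall>a\<in>A. \<forall>b\<in>B. \<not> clash a (\<sigma> a) b (\<tau> b)"
proof -
  define clash' where "clash' i s j t \<longleftrightarrow>
      (case (i, j) of (Inl a, Inr b) \<Rightarrow> clash a s b t | (Inr b, Inl a) \<Rightarrow> clash a t b s | _ \<Rightarrow> False)"
    for i j and s t :: 'v
  obtain F where F: "\<forall>i\<in>A <+> B. \<forall>j\<in>A <+> B. i \<noteq> j \<longrightarrow> \<not> clash' i (F i) j (F j)"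
  proof (rule exE[OF clash_free_labelling[OF card]])
    show "clash' j t i s" if "clash' i s j t" for i s j t
      using that by (cases i; cases j) (simp_all add: clash'_def)
    show "s = s'" if "i \<in> A <+> B" "j \<in> A <+> B" "clash' i s j t" "clash' i s' j t" for i j s s' t
      using that unique_left unique_right by (cases i; cases j) (auto simp: clash'_def)
  qed
  have "\<not> clash a (F (Inl a)) b (F (Inr b))" if "a \<in> A" "b \<in> B" for a b
    using F[rule_format, OF InlI[OF that(1)] InrI[OF that(2)]] by (simp add: clash'_def)
  then show ?thesis
    by (intro exI[of _ "\<lambda>a. F (Inl a)"] exI[of _ "\<lambda>b. F (Inr b)"]) blast
qed

lemma subset_closed_if_rational_gaps:
  fixes A B :: "real set"
  assumes "closed B"
    and gaps: "\<And>a b :: rat. {of_rat a<..<of_rat b} \<inter> B = {} \<Longrightarrow> {of_rat a<..<of_rat b} \<inter> A = {}"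
  shows "A \<subseteq> B"
proof
  fix x
  assume "x \<in> A"
  show "x \<in> B"
  proof (rule ccontr)
    assume "x \<notin> B"
    then obtain e where "e > 0" and ball: "ball x e \<subseteq> - B"
      using assms(1) open_contains_ball[of "- B"] by (auto simp: closed_def)
    obtain a :: rat where a: "x - e < of_rat a" "of_rat a < x"
      using of_rat_dense[of "x - e" x] \<open>e > 0\<close> by auto
    obtain b :: rat where b: "x < of_rat b" "of_rat b < x + e"
      using of_rat_dense[of x "x + e"] \<open>e > 0\<close> by auto
    have "{of_rat a<..<of_rat b} \<subseteq> ball x e"
      using a b by (auto simp: dist_real_def)
    then have "{of_rat a<..<of_rat b} \<inter> A = {}"
      using ball gaps by blast
    then show False
      using \<open>x \<in> A\<close> a b by auto
  qed
qed

definition rational_gaps :: "real set \<Rightarrow> (rat \<times> rat) set" where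
  "rational_gaps D = {(a, b). {of_rat a<..<of_rat b} \<inter> D = {}}"

lemma inj_on_rational_gaps: "inj_on rational_gaps {D. closed D}"
proof (rule inj_onI)
  fix D D'
  assume "D \<in> {D. closed D}" "D' \<in> {D. closed D}" "rational_gaps D = rational_gaps D'"
  then show "D = D'"
    using subset_closed_if_rational_gaps[of D D'] subset_closed_if_rational_gaps[of D' D]
    by (auto simp: rational_gaps_def set_eq_iff)
qed

lemma continuous_real_eqI_rational_subgraph:
  fixes f g :: "real \<Rightarrow> real"
  assumes "continuous_on UNIV f" "continuous_on UNIV g"
    and subgraph: "\<And>a b :: rat. of_rat b < f (of_rat a) \<longleftrightarrow> of_rat b < g (of_rat a)"
  shows "f = g"
proof -
  have no_rational_between: "\<not> u < v" if "\<And>b :: rat. of_rat b < u \<longleftrightarrow> of_rat b < v" for u v :: real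
  proof
    assume "u < v"
    then obtain b where "u < of_rat b" "of_rat b < v"
      using of_rat_dense by blast
    then show False
      using that[of b] by simp
  qed
  have "f x = g x" if "x \<in> \<rat>" for x
  proof -
    obtain a where x: "x = of_rat a"
      using \<open>x \<in> \<rat>\<close> Rats_cases by blast
    have "\<not> f x < g x" "\<not> g x < f x"
      unfolding x using no_rational_between subgraph by blast+
    then show ?thesis
      by linarith
  qed
  then have "\<rat> \<subseteq> {x. f x = g x}"
    by blast
  moreover have "closed {x. f x = g x}"
    using assms(1,2) by (intro closed_Collect_eq) auto
  ultimately have "closure \<rat> \<subseteq> {x. f x = g x}"
    by (rule closure_minimal)
  then show ?thesis
    by (auto simp: Rats_closure_real)
qed

definition rational_subgraph :: "(real \<Rightarrow> real) \<Rightarrow> (rat \<times> rat) set" where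
  "rational_subgraph f = {(a, b). of_rat b < f (of_rat a)}"

lemma inj_on_rational_subgraph: "inj_on rational_subgraph {f. continuous_on UNIV f}"
proof (rule inj_onI)
  fix f g
  assume "f \<in> {f. continuous_on UNIV f}" "g \<in> {f. continuous_on UNIV f}"
    and "rational_subgraph f = rational_subgraph g"
  then show "f = g"
    by (intro continuous_real_eqI_rational_subgraph) (auto simp: rational_subgraph_def set_eq_iff)
qed

lemma card_of_countable_Pow_le_reals: "|UNIV :: 'c::countable set set| \<le>o |UNIV :: real set|"
proof -
  have "inj (image (to_nat :: 'c \<Rightarrow> nat))"
    by (simp add: inj_image_eq_iff inj_on_def)
  then have "|UNIV :: 'c set set| \<le>o |UNIV :: nat set set|"
    by (meson card_of_ordLeq subset_UNIV)
  moreover have "|UNIV :: nat set set| \<le>o |UNIV :: real set|"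
    using eqpoll_imp_lepoll[OF nat_sets_eqpoll_reals] unfolding lepoll_def card_of_ordLeq .
  ultimately show ?thesis
    by (rule ordLeq_transitive)
qed

lemma card_of_closed_le_reals: "|{D :: real set. closed D}| \<le>o |UNIV :: real set|"
  using inj_on_rational_gaps card_of_ordLeq[of "{D. closed D}" "UNIV :: (rat \<times> rat) set set"]
    card_of_countable_Pow_le_reals ordLeq_transitive by blast

lemma card_of_continuous_le_reals: "|{f :: real \<Rightarrow> real. continuous_on UNIV f}| \<le>o |UNIV :: real set|"
  using inj_on_rational_subgraph card_of_ordLeq[of "{f. continuous_on UNIV f}" "UNIV :: (rat \<times> rat) set set"]
    card_of_countable_Pow_le_reals ordLeq_transitive by blast

lemma closed_zero_set_function:
  fixes D :: "'a::metric_space set"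
  assumes "closed D"
  shows "\<exists>\<phi> :: 'a \<Rightarrow> real. continuous_on UNIV \<phi> \<and> (\<forall>z. \<phi> z = 0 \<longleftrightarrow> z \<in> D)"
proof (cases "D = {}")
  case True
  then show ?thesis
    by (intro exI[of _ "\<lambda>_. 1"]) auto
next
  case False
  then show ?thesis
    using assms in_closed_iff_infdist_zero
    by (intro exI[of _ "\<lambda>z. infdist z D"]) (auto intro: continuous_on_infdist continuous_on_id)
qed

lemma card_of_Plus_le_reals:
  assumes "A \<subseteq> CL \<times> Cfun" and "B \<subseteq> CL"
  shows "|A <+> B| \<le>o |UNIV :: real set|"
proof -
  have infinite: "\<not> finite (Field |UNIV :: real set| )"
    by (simp add: Field_card_of infinite_UNIV_char_0)
  have CL: "|CL| \<le>o |UNIV :: real set|" and Cfun: "|Cfun| \<le>o |UNIV :: real set|"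
    unfolding CL_def Cfun_def by (rule card_of_closed_le_reals, rule card_of_continuous_le_reals)
  have "|A| \<le>o |CL \<times> Cfun|" "|B| \<le>o |CL|"
    using assms by (simp_all add: card_of_mono1)
  moreover have "|CL \<times> Cfun| \<le>o |UNIV :: real set|"
    using card_of_Times_ordLeq_infinite_Field[OF infinite CL Cfun card_of_Card_order] .
  ultimately show ?thesis
    using card_of_Plus_ordLeq_infinite_Field[OF infinite _ _ card_of_Card_order]
      ordLeq_transitive CL by metis
qed

lemma ex_perturbations_avoiding_constants:
  assumes "\<E> \<subseteq> CL" and "hereditary \<E>"
    and zero_set: "\<And>D z. D \<in> CL \<Longrightarrow> \<zeta> D z = 0 \<longleftrightarrow> z \<in> D"
  shows "\<exists>\<sigma> \<tau>. \<forall>D\<in>\<E>. \<forall>f\<in>Cfun. \<forall>E\<in>CL - \<E>. \<exists>z\<in>E. f z + \<sigma> D f * \<zeta> D z \<noteq> \<tau> E"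
proof -
  define A where "A = {(D, f). D \<in> \<E> \<and> f \<in> Cfun}"
  define clash where "clash = (\<lambda>(D, f) s E c. \<forall>z\<in>E. f z + s * \<zeta> D z = (c :: real))"
  have down_closed: "E \<in> \<E>" if "E \<in> CL" "E \<subseteq> D" "D \<in> \<E>" for D E
    using assms(1,2) that unfolding hereditary_def by blast
  have "|A <+> (CL - \<E>)| \<le>o |UNIV :: real set|"
    using assms(1) by (intro card_of_Plus_le_reals) (auto simp: A_def)
  then have "\<exists>\<sigma> \<tau>. \<forall>a\<in>A. \<forall>E\<in>CL - \<E>. \<not> clash a (\<sigma> a) E (\<tau> E)"
  proof (rule bipartite_clash_free_labelling)
    fix a E s s' c
    assume "a \<in> A" "E \<in> CL - \<E>" "clash a s E c" "clash a s' E c"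
    then obtain D f where D: "D \<in> \<E>"
      and eqs: "\<forall>z\<in>E. f z + s * \<zeta> D z = c" "\<forall>z\<in>E. f z + s' * \<zeta> D z = c"
      by (auto simp: A_def clash_def)
    obtain p where p: "p \<in> E" "p \<notin> D"
      using down_closed \<open>E \<in> CL - \<E>\<close> D by blast
    have "\<zeta> D p \<noteq> 0"
      using zero_set[of D p] p(2) D assms(1) by blast
    moreover have "s * \<zeta> D p = s' * \<zeta> D p"
      using eqs p(1) by (metis add_left_cancel)
    ultimately show "s = s'"
      by simp
  next
    fix a E s c c'
    assume "a \<in> A" "E \<in> CL - \<E>" "clash a s E c" "clash a s E c'"
    then obtain D f where "D \<in> \<E>"
      and "\<forall>z\<in>E. f z + s * \<zeta> D z = c" "\<forall>z\<in>E. f z + s * \<zeta> D z = c'"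
      by (auto simp: A_def clash_def)
    moreover have "E \<noteq> {}"
      using down_closed[OF _ empty_subsetI \<open>D \<in> \<E>\<close>] \<open>E \<in> CL - \<E>\<close> by (auto simp: CL_def)
    ultimately show "c = c'"
      by auto
  qed
  then obtain \<sigma> \<tau> where \<sigma>\<tau>: "\<forall>a\<in>A. \<forall>E\<in>CL - \<E>. \<not> clash a (\<sigma> a) E (\<tau> E)"
    by blast
  have "\<exists>z\<in>E. f z + \<sigma> (D, f) * \<zeta> D z \<noteq> \<tau> E" if "D \<in> \<E>" "f \<in> Cfun" "E \<in> CL - \<E>" for D f E
    using \<sigma>\<tau>[rule_format, of "(D, f)" E] that by (simp add: A_def clash_def)
  then show ?thesis
    by (intro exI[of _ "\<lambda>D f. \<sigma> (D, f)"] exI[of _ \<tau>]) blast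
qed

lemma ex_E_of_Cfun_eq_hereditary:
  assumes "\<E> \<subseteq> CL" and "hereditary \<E>"
  shows "\<exists>G \<subseteq> Cfun. E_of G Cfun = \<E>"
proof -
  have zero_sets: "\<forall>D\<in>CL. \<exists>\<phi> :: real \<Rightarrow> real. continuous_on UNIV \<phi> \<and> (\<forall>z. \<phi> z = 0 \<longleftrightarrow> z \<in> D)"
    unfolding CL_def using closed_zero_set_function by blast
  obtain \<zeta> :: "real set \<Rightarrow> real \<Rightarrow> real"
    where \<zeta>: "\<forall>D\<in>CL. continuous_on UNIV (\<zeta> D) \<and> (\<forall>z. \<zeta> D z = 0 \<longleftrightarrow> z \<in> D)"
    using bchoice[OF zero_sets] by blast
  have zero_set: "\<zeta> D z = 0 \<longleftrightarrow> z \<in> D" if "D \<in> CL" for D z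
    using \<zeta> that by blast
  obtain \<sigma> \<tau> where avoid: "\<forall>D\<in>\<E>. \<forall>f\<in>Cfun. \<forall>E\<in>CL - \<E>. \<exists>z\<in>E. f z + \<sigma> D f * \<zeta> D z \<noteq> \<tau> E"
    using ex_perturbations_avoiding_constants[OF assms zero_set] by blast
  define G where "G = {(\<lambda>z. f z + \<sigma> D f * \<zeta> D z) | D f. D \<in> \<E> \<and> f \<in> Cfun}"
  have "(\<lambda>z. f z + \<sigma> D f * \<zeta> D z) \<in> Cfun" if "D \<in> \<E>" "f \<in> Cfun" for D f
    using \<zeta> that assms(1) unfolding Cfun_def by (auto intro!: continuous_intros)
  then have "G \<subseteq> Cfun"
    unfolding G_def by blast
  moreover have "\<E> \<subseteq> E_of G Cfun"
  proof
    fix E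
    assume "E \<in> \<E>"
    have "\<exists>g\<in>G. \<forall>z\<in>E. f z = g z" if "f \<in> Cfun" for f
    proof
      show "(\<lambda>z. f z + \<sigma> E f * \<zeta> E z) \<in> G"
        using \<open>E \<in> \<E>\<close> that by (auto simp: G_def)
      show "\<forall>z\<in>E. f z = f z + \<sigma> E f * \<zeta> E z"
        using \<zeta> \<open>E \<in> \<E>\<close> assms(1) by auto
    qed
    then show "E \<in> E_of G Cfun"
      using \<open>E \<in> \<E>\<close> assms(1) by (auto simp: E_of_def R_rel_def)
  qed
  moreover have "E \<in> \<E>" if "E \<in> E_of G Cfun" for E
  proof (rule ccontr)
    assume "E \<notin> \<E>"
    have "((\<lambda>_. \<tau> E), E) \<in> R_rel G"
      using that by (auto simp: E_of_def Cfun_def)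
    then obtain D f where "D \<in> \<E>" "f \<in> Cfun" and agree: "\<forall>z\<in>E. \<tau> E = f z + \<sigma> D f * \<zeta> D z"
      unfolding R_rel_def G_def by auto
    moreover have "E \<in> CL - \<E>"
      using that \<open>E \<notin> \<E>\<close> by (simp add: E_of_def)
    ultimately obtain z where "z \<in> E" "f z + \<sigma> D f * \<zeta> D z \<noteq> \<tau> E"
      using avoid by blast
    then show False
      using agree by simp
  qed
  ultimately show ?thesis
    by blast
qed

lemma E_of_antimono: "F \<subseteq> F' \<Longrightarrow> E_of G F' \<subseteq> E_of G F"
  unfolding E_of_def by blast

theorem theorem2p5:
  assumes "\<E> \<subseteq> CL" and "hereditary \<E>"
  shows "\<exists>G \<subseteq> Cfun. \<E> \<in> K_fam G \<and> (\<forall>K\<in>K_fam G. \<E> \<subseteq> K)"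
proof -
  obtain G where "G \<subseteq> Cfun" and G: "E_of G Cfun = \<E>"
    using ex_E_of_Cfun_eq_hereditary[OF assms] by blast
  moreover have "\<E> \<in> K_fam G"
    unfolding K_fam_def using G by blast
  moreover have "\<E> \<subseteq> K" if "K \<in> K_fam G" for K
    using that E_of_antimono unfolding K_fam_def G[symmetric] by blast
  ultimately show ?thesis
    by blast
qed

end
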